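(* Let $G$ be a graph with Hermitian adjacency matrix $A$ and let $u$ be an arbitrary vertex of $G$. Then $G$ has universal perfect state transfer if and only if perfect state transfer occurs from $u$ to every vertex of $G$ (i.e. for every vertex $v$ there is $t>0$ with $|\langle v|e^{-\mathtt{i} A t}|u\rangle|=1$).
   Context: The continuous-time quantum walk on a graph with Hermitian adjacency matrix $A$ is $U(t)=\exp(-\mathtt{i} A t)$. Perfect state transfer occurs from vertex $v$ to vertex $w$ at time $t>0$ if $|\langle w| e^{-\mathtt{i} A t}|v\rangle|=1$. $G$ has universal perfect state transfer if for every pair of vertices $v,w$ (including $v=w$) perfect state transfer occurs from $v$ to $w$ at some time $t>0$. *)

theory Defs
  imports "HOL-Analysis.Analysis"
begin

text \<open>Graphs are identified with their Hermitian adjacency matrix A (complex weighted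
  graph); vertices are the elements of a finite type 'n.\<close>

definition hermitian :: "complex^'n^'n \<Rightarrow> bool" where
  "hermitian A \<longleftrightarrow> (\<forall>i j. A $ i $ j = cnj (A $ j $ i))"

fun mat_pow :: "complex^'n^'n \<Rightarrow> nat \<Rightarrow> complex^'n^'n" where
  "mat_pow A 0 = mat 1"
| "mat_pow A (Suc k) = A ** mat_pow A k"

definition mat_exp :: "complex^'n^'n \<Rightarrow> complex^'n^'n" where
  "mat_exp M = (\<chi> i j. (\<Sum>k. (mat_pow M k) $ i $ j / of_nat (fact k)))"

definition walk :: "complex^'n^'n \<Rightarrow> real \<Rightarrow> complex^'n^'n" where
  "walk A t = mat_exp (\<chi> i j. - \<i> * of_real t * A $ i $ j)"

definition pst_at :: "complex^'n^'n \<Rightarrow> 'n \<Rightarrow> 'n \<Rightarrow> real \<Rightarrow> bool" where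
  "pst_at A v w t \<longleftrightarrow> t > 0 \<and> norm (walk A t $ w $ v) = 1"

definition pst :: "complex^'n^'n \<Rightarrow> 'n \<Rightarrow> 'n \<Rightarrow> bool" where
  "pst A v w \<longleftrightarrow> (\<exists>t. pst_at A v w t)"

definition universal_pst :: "complex^'n^'n \<Rightarrow> bool" where
  "universal_pst A \<longleftrightarrow> (\<forall>v w. pst A v w)"

end

theory Submission imports Defs begin

text \<open>Since U(t) = exp(-iAt) is a one-parameter group of unitary matrices, a unit entry
  |U(t) v u| = 1 forces the u-th column of U(t) to vanish off v, whence
  |U(s + t) w u| = |U(s) w v|. Given perfect state transfer from u to v at time t1, from u
  to w at time t2 and from u back to u at time p, pick n with n p > t1: then at time
  s = t2 + n p - t1 > 0 we get |U(s) w v| = |U(t2 + n p) w u| = |U(t2) w u| = 1.\<close>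

lemma matrix_matrix_mult_component:
  "(M ** N) $ i $ j = (\<Sum>k\<in>UNIV. M $ i $ k * N $ k $ j)"
  by (simp add: matrix_matrix_mult_def)

lemma mat_pow_add: "mat_pow M (m + n) = mat_pow M m ** mat_pow M n"
  by (induction m) (simp_all add: matrix_mul_assoc matrix_mul_lid)

lemma mat_pow_Suc_right: "mat_pow M (Suc n) = mat_pow M n ** M"
  using mat_pow_add[of M n 1] by (simp add: matrix_mul_rid)

definition mat_scale :: "complex \<Rightarrow> complex^'n^'n \<Rightarrow> complex^'n^'n" where
  "mat_scale c M = (\<chi> i j. c * M $ i $ j)"

definition mat_adjoint :: "complex^'n^'n \<Rightarrow> complex^'n^'n" where
  "mat_adjoint M = (\<chi> i j. cnj (M $ j $ i))"

lemma mat_pow_scale: "mat_pow (mat_scale c M) n = mat_scale (c ^ n) (mat_pow M n)"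
  by (induction n)
    (simp_all add: mat_scale_def mat_def vec_eq_iff matrix_matrix_mult_component
      sum_distrib_left algebra_simps)

lemma mat_adjoint_mult: "mat_adjoint (M ** N) = mat_adjoint N ** mat_adjoint M"
  by (simp add: mat_adjoint_def vec_eq_iff matrix_matrix_mult_component mult.commute)

lemma mat_pow_adjoint: "mat_pow (mat_adjoint M) n = mat_adjoint (mat_pow M n)"
proof (induction n)
  case 0
  show ?case by (simp add: mat_adjoint_def mat_def vec_eq_iff)
next
  case (Suc n)
  have "mat_pow (mat_adjoint M) (Suc n) = mat_adjoint (mat_pow M n ** M)"
    by (simp add: Suc mat_adjoint_mult)
  also have "\<dots> = mat_adjoint (mat_pow M (Suc n))"
    by (simp only: mat_pow_Suc_right)
  finally show ?case .
qed

lemma hermitian_iff_mat_adjoint: "hermitian A \<longleftrightarrow> mat_adjoint A = A"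
  unfolding hermitian_def mat_adjoint_def vec_eq_iff by (simp, metis)

definition mat_l1_norm :: "complex^'n^'n \<Rightarrow> real" where
  "mat_l1_norm M = (\<Sum>i\<in>UNIV. \<Sum>j\<in>UNIV. norm (M $ i $ j))"

lemma mat_l1_norm_nonneg: "0 \<le> mat_l1_norm M"
  unfolding mat_l1_norm_def by (intro sum_nonneg) auto

lemma row_l1_norm_le_mat_l1_norm: "(\<Sum>j\<in>UNIV. norm (M $ i $ j)) \<le> mat_l1_norm M"
  unfolding mat_l1_norm_def by (rule member_le_sum) (auto intro: sum_nonneg)

lemma norm_entry_le_mat_l1_norm: "norm (M $ i $ j) \<le> mat_l1_norm M"
  using member_le_sum[of j UNIV "\<lambda>j. norm (M $ i $ j)"] row_l1_norm_le_mat_l1_norm[of M i]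
  by simp

lemma mat_l1_norm_mult: "mat_l1_norm (M ** N) \<le> mat_l1_norm M * mat_l1_norm N"
proof -
  have "mat_l1_norm (M ** N)
      \<le> (\<Sum>i\<in>UNIV. \<Sum>j\<in>UNIV. \<Sum>k\<in>UNIV. norm (M $ i $ k) * norm (N $ k $ j))"
    unfolding mat_l1_norm_def matrix_matrix_mult_component
    by (intro sum_mono order_trans[OF norm_sum]) (simp add: norm_mult)
  also have "\<dots> = (\<Sum>i\<in>UNIV. \<Sum>k\<in>UNIV. norm (M $ i $ k) * (\<Sum>j\<in>UNIV. norm (N $ k $ j)))"
    by (rule sum.cong[OF refl], subst sum.swap) (simp only: sum_distrib_left)
  also have "\<dots> \<le> (\<Sum>i\<in>UNIV. \<Sum>k\<in>UNIV. norm (M $ i $ k) * mat_l1_norm N)"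
    by (intro sum_mono mult_left_mono row_l1_norm_le_mat_l1_norm norm_ge_zero)
  also have "\<dots> = mat_l1_norm M * mat_l1_norm N"
    by (simp add: mat_l1_norm_def sum_distrib_right)
  finally show ?thesis .
qed

lemma mat_l1_norm_mat_pow_le:
  fixes M :: "complex^'n^'n"
  shows "mat_l1_norm (mat_pow M n) \<le> mat_l1_norm (mat 1 :: complex^'n^'n) * mat_l1_norm M ^ n"
proof (induction n)
  case (Suc n)
  have "mat_l1_norm (mat_pow M (Suc n)) \<le> mat_l1_norm M * mat_l1_norm (mat_pow M n)"
    by (simp add: mat_l1_norm_mult)
  also have "\<dots> \<le> mat_l1_norm M * (mat_l1_norm (mat 1 :: complex^'n^'n) * mat_l1_norm M ^ n)"
    by (intro mult_left_mono Suc mat_l1_norm_nonneg)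
  finally show ?case by (simp add: algebra_simps)
qed simp

lemma summable_norm_mat_exp_series:
  fixes M :: "complex^'n^'n"
  shows "summable (\<lambda>n. norm (z ^ n * mat_pow M n $ i $ j / fact n))"
proof (rule summable_comparison_test)
  let ?C = "mat_l1_norm (mat 1 :: complex^'n^'n)"
  show "summable (\<lambda>n. ?C * (inverse (fact n) * (norm z * mat_l1_norm M) ^ n))"
    by (intro summable_mult summable_exp)
  have "norm (norm (z ^ n * mat_pow M n $ i $ j / fact n))
      \<le> ?C * (inverse (fact n) * (norm z * mat_l1_norm M) ^ n)" for n
  proof -
    have "norm (norm (z ^ n * mat_pow M n $ i $ j / fact n))
        = norm z ^ n * norm (mat_pow M n $ i $ j) / fact n"
      by (simp add: norm_mult norm_divide norm_power)
    also have "\<dots> \<le> norm z ^ n * (?C * mat_l1_norm M ^ n) / fact n"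
      by (intro divide_right_mono mult_left_mono
          order_trans[OF norm_entry_le_mat_l1_norm mat_l1_norm_mat_pow_le]) auto
    also have "\<dots> = ?C * (inverse (fact n) * (norm z * mat_l1_norm M) ^ n)"
      by (simp add: power_mult_distrib divide_inverse)
    finally show ?thesis .
  qed
  then show "\<exists>N. \<forall>n\<ge>N. norm (norm (z ^ n * mat_pow M n $ i $ j / fact n))
      \<le> ?C * (inverse (fact n) * (norm z * mat_l1_norm M) ^ n)"
    by blast
qed

lemma mat_exp_scale_sums:
  "(\<lambda>n. z ^ n * mat_pow M n $ i $ j / fact n) sums mat_exp (mat_scale z M) $ i $ j"
  using summable_norm_cancel[OF summable_norm_mat_exp_series[of z M i j]]
  unfolding mat_exp_def mat_pow_scale by (simp add: mat_scale_def summable_sums)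

lemma mat_exp_scale_0:
  fixes M :: "complex^'n^'n"
  shows "mat_exp (mat_scale 0 M) = mat 1"
proof -
  have "(\<lambda>n. 0 ^ n * mat_pow M n $ i $ j / fact n) = (\<lambda>n. if n = 0 then mat 1 $ i $ j else 0)"
    for i j :: 'n
    by (auto simp: fun_eq_iff)
  then have "(\<lambda>n. 0 ^ n * mat_pow M n $ i $ j / fact n) sums (mat 1 $ i $ j :: complex)" for i j
    using sums_single[of 0 "\<lambda>_. mat 1 $ i $ j :: complex"] by simp
  then have "mat_exp (mat_scale 0 M) $ i $ j = mat 1 $ i $ j" for i j
    using mat_exp_scale_sums[of 0 M i j] sums_unique2 by blast
  then show ?thesis by (simp add: vec_eq_iff)
qed

lemma power_add_div_fact:
  fixes z w :: complex
  shows "(z + w) ^ n / fact n = (\<Sum>a\<le>n. z ^ a / fact a * (w ^ (n - a) / fact (n - a)))"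
  using exp_series_add_commuting[of z w n]
  by (simp add: scaleR_conv_of_real divide_inverse mult.commute[of _ "inverse _"] mult.assoc)

lemma mat_exp_scale_add:
  "mat_exp (mat_scale (z + w) M) = mat_exp (mat_scale z M) ** mat_exp (mat_scale w M)"
proof -
  let ?P = "mat_pow M"
  let ?a = "\<lambda>z i j n. z ^ n * ?P n $ i $ j / fact n"
  have "?a (z + w) i j sums (mat_exp (mat_scale z M) ** mat_exp (mat_scale w M)) $ i $ j" for i j
  proof -
    have "(\<lambda>n. \<Sum>a\<le>n. ?a z i l a * ?a w l j (n - a))
        sums (mat_exp (mat_scale z M) $ i $ l * mat_exp (mat_scale w M) $ l $ j)" for l
      using Cauchy_product_sums[OF summable_norm_mat_exp_series summable_norm_mat_exp_series]
      by (simp only: mat_exp_scale_sums[THEN sums_unique, symmetric])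
    then have "(\<lambda>n. \<Sum>l\<in>UNIV. \<Sum>a\<le>n. ?a z i l a * ?a w l j (n - a))
        sums (mat_exp (mat_scale z M) ** mat_exp (mat_scale w M)) $ i $ j"
      unfolding matrix_matrix_mult_component by (rule sums_sum)
    moreover have "(\<Sum>l\<in>UNIV. \<Sum>a\<le>n. ?a z i l a * ?a w l j (n - a)) = ?a (z + w) i j n" for n
    proof -
      let ?c = "\<lambda>a. z ^ a / fact a * (w ^ (n - a) / fact (n - a))"
      have "(\<Sum>l\<in>UNIV. \<Sum>a\<le>n. ?a z i l a * ?a w l j (n - a))
          = (\<Sum>a\<le>n. \<Sum>l\<in>UNIV. ?a z i l a * ?a w l j (n - a))"
        by (rule sum.swap)
      also have "\<dots> = (\<Sum>a\<le>n. ?c a * ?P n $ i $ j)"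
      proof (rule sum.cong[OF refl])
        fix a assume "a \<in> {..n}"
        then have split: "?P n = ?P a ** ?P (n - a)"
          by (simp flip: mat_pow_add)
        show "(\<Sum>l\<in>UNIV. ?a z i l a * ?a w l j (n - a)) = ?c a * ?P n $ i $ j"
          unfolding split matrix_matrix_mult_component sum_distrib_left
          by (intro sum.cong refl) (simp add: field_simps)
      qed
      also have "\<dots> = ?a (z + w) i j n"
        unfolding sum_distrib_right[symmetric] power_add_div_fact[symmetric] by simp
      finally show ?thesis .
    qed
    ultimately show ?thesis by simp
  qed
  then have "mat_exp (mat_scale (z + w) M) $ i $ j
      = (mat_exp (mat_scale z M) ** mat_exp (mat_scale w M)) $ i $ j" for i j
    using mat_exp_scale_sums sums_unique2 by blast
  then show ?thesis by (intro iffD2[OF vec_eq_iff] allI)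
qed

lemma mat_exp_scale_adjoint:
  "mat_adjoint (mat_exp (mat_scale z M)) = mat_exp (mat_scale (cnj z) (mat_adjoint M))"
proof (intro iffD2[OF vec_eq_iff] allI)
  fix i j
  have "(\<lambda>n. cnj (z ^ n * mat_pow M n $ j $ i / fact n))
      = (\<lambda>n. cnj z ^ n * mat_pow (mat_adjoint M) n $ i $ j / fact n)"
    unfolding mat_pow_adjoint by (simp add: mat_adjoint_def)
  then have "(\<lambda>n. cnj z ^ n * mat_pow (mat_adjoint M) n $ i $ j / fact n)
      sums mat_adjoint (mat_exp (mat_scale z M)) $ i $ j"
    using sums_cnj[THEN iffD2, OF mat_exp_scale_sums[of z M j i]]
    by (simp only: mat_adjoint_def vec_lambda_beta)
  then show "mat_adjoint (mat_exp (mat_scale z M)) $ i $ j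
      = mat_exp (mat_scale (cnj z) (mat_adjoint M)) $ i $ j"
    by (rule sums_unique2[OF _ mat_exp_scale_sums])
qed

lemma walk_eq_mat_exp: "walk A t = mat_exp (mat_scale (- \<i> * of_real t) A)"
  by (simp add: walk_def mat_scale_def)

lemma walk_add: "walk A (s + t) = walk A s ** walk A t"
  unfolding walk_eq_mat_exp by (simp add: mat_exp_scale_add[symmetric] algebra_simps)

lemma walk_0: "walk A 0 = mat 1"
  by (simp add: walk_eq_mat_exp mat_exp_scale_0)

lemma walk_adjoint:
  assumes "hermitian A"
  shows "mat_adjoint (walk A t) = walk A (- t)"
  using assms by (simp add: walk_eq_mat_exp mat_exp_scale_adjoint hermitian_iff_mat_adjoint)

lemma walk_unitary:
  assumes "hermitian A"
  shows "mat_adjoint (walk A t) ** walk A t = mat 1"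
  by (simp add: walk_adjoint[OF assms] walk_add[symmetric] walk_0)

lemma unitary_column_norm_sum:
  assumes "mat_adjoint U ** U = mat 1"
  shows "(\<Sum>k\<in>UNIV. norm (U $ k $ j) ^ 2) = 1"
proof -
  have "of_real (norm x ^ 2) = cnj x * x" for x :: complex
    by (subst complex_norm_square) (rule mult.commute)
  then have "of_real (\<Sum>k\<in>UNIV. norm (U $ k $ j) ^ 2) = (mat_adjoint U ** U) $ j $ j"
    by (simp only: of_real_sum matrix_matrix_mult_component mat_adjoint_def vec_lambda_beta)
  also have "\<dots> = 1"
    using assms by (simp add: mat_def)
  finally show ?thesis
    by (simp only: of_real_eq_1_iff)
qed

lemma unitary_column_eq_0:
  assumes "mat_adjoint U ** U = mat 1" "norm (U $ v $ u) = 1" "k \<noteq> v"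
  shows "U $ k $ u = 0"
proof -
  have "(\<Sum>k\<in>UNIV. norm (U $ k $ u) ^ 2)
      = norm (U $ v $ u) ^ 2 + (\<Sum>k\<in>UNIV - {v}. norm (U $ k $ u) ^ 2)"
    by (simp add: sum.remove)
  then have "(\<Sum>k\<in>UNIV - {v}. norm (U $ k $ u) ^ 2) = 0"
    using unitary_column_norm_sum[OF assms(1)] assms(2) by simp
  then show ?thesis
    using assms(3) by (subst (asm) sum_nonneg_eq_0_iff) auto
qed

lemma mult_unitary_component:
  assumes "mat_adjoint U ** U = mat 1" "norm (U $ v $ u) = 1"
  shows "(M ** U) $ w $ u = M $ w $ v * U $ v $ u"
  unfolding matrix_matrix_mult_component
  by (rule sum.mono_neutral_right[where S="{v}", simplified])
    (auto simp: unitary_column_eq_0[OF assms])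

lemma norm_walk_add_component:
  assumes "hermitian A" "norm (walk A t $ v $ u) = 1"
  shows "norm (walk A (s + t) $ w $ u) = norm (walk A s $ w $ v)"
proof -
  have "walk A (s + t) $ w $ u = walk A s $ w $ v * walk A t $ v $ u"
    unfolding walk_add by (rule mult_unitary_component[OF walk_unitary[OF assms(1)] assms(2)])
  then show ?thesis by (simp add: norm_mult assms(2))
qed

lemma norm_walk_multiple_period:
  assumes "hermitian A" "norm (walk A p $ u $ u) = 1"
  shows "norm (walk A (real n * p) $ u $ u) = 1"
proof (induction n)
  case (Suc n)
  have "real (Suc n) * p = real n * p + p"
    by (simp add: algebra_simps)
  then show ?case
    using norm_walk_add_component[OF assms, of "real n * p" u] Suc by simp
qed (simp add: walk_0 mat_def)

theorem lemma2:
  fixes A :: "complex^'n^'n" and u :: 'n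
  assumes "hermitian A"
  shows "universal_pst A \<longleftrightarrow> (\<forall>v. pst A u v)"
proof
  assume "\<forall>v. pst A u v"
  then have from_u: "\<exists>t>0. norm (walk A t $ v $ u) = 1" for v
    by (simp add: pst_def pst_at_def)
  have "pst A v w" for v w
  proof -
    obtain p where "p > 0" and period: "norm (walk A p $ u $ u) = 1"
      using from_u by blast
    obtain t1 where t1: "norm (walk A t1 $ v $ u) = 1"
      using from_u by blast
    obtain t2 where "t2 > 0" and t2: "norm (walk A t2 $ w $ u) = 1"
      using from_u by blast
    obtain n :: nat where "t1 < real n * p"
      using ex_less_of_nat_mult[OF \<open>p > 0\<close>] by blast
    define s where "s = t2 + real n * p - t1"
    have "s > 0"
      using \<open>t1 < real n * p\<close> \<open>t2 > 0\<close> by (simp add: s_def)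
    have "norm (walk A s $ w $ v) = norm (walk A (t2 + real n * p) $ w $ u)"
      using norm_walk_add_component[OF assms t1, of s w] by (simp add: s_def)
    also have "\<dots> = 1"
      using norm_walk_add_component[OF assms norm_walk_multiple_period[OF assms period]] t2
      by simp
    finally show ?thesis
      using \<open>s > 0\<close> by (auto simp: pst_def pst_at_def)
  qed
  then show "universal_pst A"
    by (simp add: universal_pst_def)
qed (simp add: universal_pst_def)

end
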